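(* Suppose the underlying undirected graph of $G$ is a tree (so $m=n$ and the reduced incidence matrix $B$ is an invertible $n\times n$ matrix). Fix $s\in\mathbb C^n$. Then (1) $\hat h(\mathbb X(s))=\hat{\mathbb Y}(s)$; and (2) for every $\hat y\in\hat{\mathbb Y}(s)$, the vector $\theta_*:=\mathcal P(B^{-1}\beta(\hat y))$ is the unique vector in $(-\pi,\pi]^n$ such that $h_{\theta_*}(\hat y)\in\mathbb X(s)$.
   Context: $G=(N,E)$ is a directed graph with nodes $N=\{0,1,\dots,n\}$ and $m=|E|$ links; $(i,j)\in E$ denotes a link from $i$ to $j$. Each link has impedance $z_{ij}=r_{ij}+\mathbf{i}x_{ij}$, each node $i$ shunt admittance $y_i=g_i-\mathbf{i}b_i$. The voltage $V_0$ at node 0 is given and taken as angle reference: $V_0=|V_0|$ real and positive; $v_0:=|V_0|^2$. $\mathbb X(s)$ is the set of $x=(S,I,V,s_0)$ with $S,I\in\mathbb C^E$, $V=(V_1,\dots,V_n)$, $s_0\in\mathbb C$ satisfying $V_i-V_j=z_{ij}I_{ij}$, $S_{ij}=V_iI_{ij}^*$ for $(i,j)\in E$, and $\sum_{k:(j,k)\in E}S_{jk}-\sum_{i:(i,j)\in E}(S_{ij}-z_{ij}|I_{ij}|^2)+y_j^*|V_j|^2=s_j$ for $j\in N$. $\hat{\mathbb Y}(s)$ is the set of real $\hat y=(P,Q,\ell,v,p_0,q_0)$ ($P,Q,\ell$ indexed by $E$, $v=(v_1,\dots,v_n)$), with $S_{ij}:=P_{ij}+\mathbf{i}Q_{ij}$,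 $s_j=p_j+\mathbf{i}q_j$, satisfying $p_j=\sum_{k:(j,k)\in E}P_{jk}-\sum_{i:(i,j)\in E}(P_{ij}-r_{ij}\ell_{ij})+g_jv_j$, $q_j=\sum_{k:(j,k)\in E}Q_{jk}-\sum_{i:(i,j)\in E}(Q_{ij}-x_{ij}\ell_{ij})+b_jv_j$ for $j\in N$, and $v_j=v_i-2(r_{ij}P_{ij}+x_{ij}Q_{ij})+(r_{ij}^2+x_{ij}^2)\ell_{ij}$, $\ell_{ij}=(P_{ij}^2+Q_{ij}^2)/v_i$ for $(i,j)\in E$. Projection: $\hat h(S,I,V,s_0)=(\mathrm{Re}\,S,\mathrm{Im}\,S,(|I_{ij}|^2)_{(i,j)\in E},(|V_i|^2)_{i=1}^n,\mathrm{Re}\,s_0,\mathrm{Im}\,s_0)$. Inverse projection for $\theta\in(-\pi,\pi]^n$ (with $\theta_0:=0$): $h_\theta(\hat y)=(S,I,V,s_0)$ with $S_{ij}=P_{ij}+\mathbf{i}Q_{ij}$, $I_{ij}=\sqrt{\ell_{ij}}e^{\mathbf{i}(\theta_i-\angle S_{ij})}$, $V_i=\sqrt{v_i}e^{\mathbf{i}\theta_i}$, $s_0=p_0+\mathbf{i}q_0$. $B$ is the reduced incidence matrix: $B_{ei}=1$ if link $e$ leaves node $i$, $-1$ if it enters $i$, $0$ otherwise ($e\in E$, $i=1,\dots,n$). $\beta(\hat y)\in(-\pi,\pi]^m$ has entries $\beta_{ij}=\angle(v_i-z_{ij}^*S_{ij})$. $\mathcal P$ reduces each component modulo $2\pi$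 into $(-\pi,\pi]$. *)

theory Defs
  imports Complex_Main
begin

type_synonym cstate =
  "(nat \<times> nat \<Rightarrow> complex) \<times> (nat \<times> nat \<Rightarrow> complex) \<times> (nat \<Rightarrow> complex) \<times> complex"
type_synonym rstate =
  "(nat \<times> nat \<Rightarrow> real) \<times> (nat \<times> nat \<Rightarrow> real) \<times> (nat \<times> nat \<Rightarrow> real)
    \<times> (nat \<Rightarrow> real) \<times> real \<times> real"

text \<open>Nodes are 0..n; links are pairs (i,j) in E (a link from i to j).\<close>

definition adj :: "(nat \<times> nat) set \<Rightarrow> nat \<Rightarrow> nat \<Rightarrow> bool" where
  "adj E i j \<longleftrightarrow> (i, j) \<in> E \<or> (j, i) \<in> E"

definition underlying_tree :: "nat \<Rightarrow> (nat \<times> nat) set \<Rightarrow> bool" where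
  "underlying_tree n E \<longleftrightarrow>
     finite E \<and>
     (\<forall>(i, j)\<in>E. i \<noteq> j \<and> (j, i) \<notin> E) \<and>
     (\<forall>i\<in>{0..n}. \<forall>j\<in>{0..n}. (i, j) \<in> (E \<union> E\<inverse>)\<^sup>*) \<and>
     \<not> (\<exists>cs. 3 \<le> length cs \<and> distinct cs \<and>
            (\<forall>k < length cs - 1. adj E (cs ! k) (cs ! Suc k)) \<and> adj E (last cs) (hd cs))"

text \<open>Voltages including the fixed slack node 0.\<close>
definition fullV :: "real \<Rightarrow> (nat \<Rightarrow> complex) \<Rightarrow> nat \<Rightarrow> complex" where
  "fullV V0 V i = (if i = 0 then complex_of_real V0 else V i)"

definition fullv :: "real \<Rightarrow> (nat \<Rightarrow> real) \<Rightarrow> nat \<Rightarrow> real" where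
  "fullv V0 v i = (if i = 0 then V0\<^sup>2 else v i)"

definition Xset :: "nat \<Rightarrow> (nat \<times> nat) set \<Rightarrow> (nat \<times> nat \<Rightarrow> complex) \<Rightarrow> (nat \<Rightarrow> complex)
                    \<Rightarrow> real \<Rightarrow> (nat \<Rightarrow> complex) \<Rightarrow> cstate set" where
  "Xset n E z y V0 s = {(S, I, V, s0).
     (\<forall>e. e \<notin> E \<longrightarrow> S e = 0 \<and> I e = 0) \<and>
     (\<forall>i. i \<notin> {1..n} \<longrightarrow> V i = 0) \<and>
     (\<forall>i\<in>{1..n}. V i \<noteq> 0) \<and>
     (\<forall>(i, j)\<in>E. fullV V0 V i - fullV V0 V j = z (i, j) * I (i, j) \<and>
                 S (i, j) = fullV V0 V i * cnj (I (i, j))) \<and>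
     (\<forall>j\<in>{0..n}.
        (\<Sum>k\<in>{k. (j, k) \<in> E}. S (j, k))
        - (\<Sum>i\<in>{i. (i, j) \<in> E}. S (i, j) - z (i, j) * complex_of_real ((cmod (I (i, j)))\<^sup>2))
        + cnj (y j) * complex_of_real ((cmod (fullV V0 V j))\<^sup>2)
        = (if j = 0 then s0 else s j))}"

text \<open>The set Y-hat(s), with r = Re z, x = Im z, g = Re y, b = - Im y, p + iq = s.\<close>
definition Yhat :: "nat \<Rightarrow> (nat \<times> nat) set \<Rightarrow> (nat \<times> nat \<Rightarrow> complex) \<Rightarrow> (nat \<Rightarrow> complex)
                    \<Rightarrow> real \<Rightarrow> (nat \<Rightarrow> complex) \<Rightarrow> rstate set" where
  "Yhat n E z y V0 s = {(P, Q, l, v, p0, q0).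
     (\<forall>e. e \<notin> E \<longrightarrow> P e = 0 \<and> Q e = 0 \<and> l e = 0) \<and>
     (\<forall>i. i \<notin> {1..n} \<longrightarrow> v i = 0) \<and>
     (\<forall>i\<in>{1..n}. v i > 0) \<and>
     (\<forall>j\<in>{0..n}.
        (if j = 0 then p0 else Re (s j)) =
          (\<Sum>k\<in>{k. (j, k) \<in> E}. P (j, k))
          - (\<Sum>i\<in>{i. (i, j) \<in> E}. P (i, j) - Re (z (i, j)) * l (i, j))
          + Re (y j) * fullv V0 v j \<and>
        (if j = 0 then q0 else Im (s j)) =
          (\<Sum>k\<in>{k. (j, k) \<in> E}. Q (j, k))
          - (\<Sum>i\<in>{i. (i, j) \<in> E}. Q (i, j) - Im (z (i, j)) * l (i, j))
          + (- Im (y j)) * fullv V0 v j) \<and>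
     (\<forall>(i, j)\<in>E.
        fullv V0 v j = fullv V0 v i - 2 * (Re (z (i, j)) * P (i, j) + Im (z (i, j)) * Q (i, j))
                       + ((Re (z (i, j)))\<^sup>2 + (Im (z (i, j)))\<^sup>2) * l (i, j) \<and>
        l (i, j) = ((P (i, j))\<^sup>2 + (Q (i, j))\<^sup>2) / fullv V0 v i)}"

definition hhat :: "cstate \<Rightarrow> rstate" where
  "hhat x = (case x of (S, I, V, s0) \<Rightarrow>
     (\<lambda>e. Re (S e), \<lambda>e. Im (S e), \<lambda>e. (cmod (I e))\<^sup>2, \<lambda>i. (cmod (V i))\<^sup>2, Re s0, Im s0))"

definition Theta :: "nat \<Rightarrow> (nat \<Rightarrow> real) set" where
  "Theta n = {\<theta>. (\<forall>i\<in>{1..n}. - pi < \<theta> i \<and> \<theta> i \<le> pi) \<and> (\<forall>i. i \<notin> {1..n} \<longrightarrow> \<theta> i = 0)}"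

definition h_theta :: "(nat \<Rightarrow> real) \<Rightarrow> rstate \<Rightarrow> cstate" where
  "h_theta \<theta> yh = (case yh of (P, Q, l, v, p0, q0) \<Rightarrow>
     (let th = (\<lambda>i. if i = 0 then 0 else \<theta> i) in
     (\<lambda>e. Complex (P e) (Q e),
      \<lambda>e. complex_of_real (sqrt (l e)) * cis (th (fst e) - Arg (Complex (P e) (Q e))),
      \<lambda>i. complex_of_real (sqrt (v i)) * cis (th i),
      Complex p0 q0)))"

text \<open>Reduced incidence matrix B (rows: links, columns: nodes 1..n).\<close>
definition incB :: "nat \<times> nat \<Rightarrow> nat \<Rightarrow> real" where
  "incB e i = (if fst e = i then 1 else if snd e = i then -1 else 0)"

definition Binv_apply :: "nat \<Rightarrow> (nat \<times> nat) set \<Rightarrow> (nat \<times> nat \<Rightarrow> real) \<Rightarrow> nat \<Rightarrow> real" where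
  "Binv_apply n E w = (THE u. (\<forall>i. i \<notin> {1..n} \<longrightarrow> u i = 0) \<and>
                              (\<forall>e\<in>E. (\<Sum>i=1..n. incB e i * u i) = w e))"

definition beta :: "(nat \<times> nat \<Rightarrow> complex) \<Rightarrow> real \<Rightarrow> rstate \<Rightarrow> nat \<times> nat \<Rightarrow> real" where
  "beta z V0 yh = (case yh of (P, Q, l, v, p0, q0) \<Rightarrow>
     (\<lambda>e. Arg (complex_of_real (fullv V0 v (fst e)) - cnj (z e) * Complex (P e) (Q e))))"

text \<open>Reduction modulo 2 pi into (-pi,pi].\<close>
definition wrap :: "real \<Rightarrow> real" where
  "wrap x = x - 2 * pi * of_int \<lceil>(x - pi) / (2 * pi)\<rceil>"

definition theta_star :: "nat \<Rightarrow> (nat \<times> nat) set \<Rightarrow> (nat \<times> nat \<Rightarrow> complex) \<Rightarrow> real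
                          \<Rightarrow> rstate \<Rightarrow> nat \<Rightarrow> real" where
  "theta_star n E z V0 yh =
     (\<lambda>i. if i \<in> {1..n} then wrap (Binv_apply n E (beta z V0 yh) i) else 0)"

end

theory Submission
  imports Defs "HOL-Library.Transitive_Closure_Table"
begin

text \<open>
  Taking squared magnitudes in \<open>V\<^sub>j = V\<^sub>i - z I\<close> and \<open>S = V\<^sub>i cnj I\<close> eliminates all phases,
  so projections of complex solutions solve the real equations. Conversely, lift a real solution
  with angles \<open>\<theta>\<close>: the power equation holds by construction, and the lifted voltage drop
  \<open>V\<^sub>i - z I\<close> equals \<open>sqrt v\<^sub>j cis (\<theta>\<^sub>i - \<beta>\<^sub>i\<^sub>j)\<close>. So the lift is a complex solution iff
  \<open>\<theta>\<^sub>i - \<theta>\<^sub>j \<equiv> \<beta>\<^sub>i\<^sub>j (mod 2\<pi>)\<close> on every link. On a tree this system is solved by the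
  potential \<open>B\<^sup>-\<^sup>1\<beta>\<close>, obtained by integrating \<open>\<beta>\<close> from the root, and two solutions with
  \<open>\<theta>\<^sub>0 = 0\<close> agree modulo \<open>2\<pi>\<close> because their difference has zero increments along the
  connected tree. Reducing into \<open>(-\<pi>, \<pi>]\<close> picks the unique representative.
\<close>

section \<open>Potentials on a tree\<close>

lemma rtrancl_path_successively:
  "rtrancl_path r x xs y \<Longrightarrow> successively r (x # xs) \<and> last (x # xs) = y"
  by (induction rule: rtrancl_path.induct) auto

lemma rtrancl_imp_distinct_path:
  assumes "(x, y) \<in> R\<^sup>*"
  obtains xs where "distinct (x # xs)" "last (x # xs) = y"
    "successively (\<lambda>a b. (a, b) \<in> R) (x # xs)"
proof -
  have "(\<lambda>a b. (a, b) \<in> R)\<^sup>*\<^sup>* x y"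
    using assms by (simp add: rtranclp_rtrancl_eq)
  then obtain xs where "rtrancl_path (\<lambda>a b. (a, b) \<in> R) x xs y"
    by (auto simp: rtranclp_eq_rtrancl_path)
  then obtain xs' where p: "rtrancl_path (\<lambda>a b. (a, b) \<in> R) x xs' y" "distinct (x # xs')"
    by (rule rtrancl_path_distinct)
  show thesis
    using that[OF p(2)] rtrancl_path_successively[OF p(1)] by blast
qed

lemma rtrancl_preserves:
  assumes "(x, y) \<in> (E \<union> E\<inverse>)\<^sup>*" "\<forall>(a, b)\<in>E. P a \<longleftrightarrow> P b" "P x"
  shows "P y"
  using assms(1,3) by (induction rule: rtrancl_induct) (use assms(2) in blast)+

lemma underlying_treeD:
  assumes "underlying_tree n E"
  shows "finite E" "\<And>i j. (i, j) \<in> E \<Longrightarrow> i \<noteq> j" "\<And>i j. (i, j) \<in> E \<Longrightarrow> (j, i) \<notin> E"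
    "\<And>i j. i \<le> n \<Longrightarrow> j \<le> n \<Longrightarrow> (i, j) \<in> (E \<union> E\<inverse>)\<^sup>*"
    "\<And>cs. 3 \<le> length cs \<Longrightarrow> distinct cs \<Longrightarrow> \<forall>k < length cs - 1. adj E (cs ! k) (cs ! Suc k)
      \<Longrightarrow> adj E (last cs) (hd cs) \<Longrightarrow> False"
  using assms unfolding underlying_tree_def by auto

lemma tree_edge_invariant:
  assumes "underlying_tree n E" "\<forall>(a, b)\<in>E. P a \<longleftrightarrow> P b" "P 0" "i \<le> n"
  shows "P i"
proof -
  have "(0, i) \<in> (E \<union> E\<inverse>)\<^sup>*"
    using underlying_treeD(4)[OF assms(1)] assms(4) by simp
  then show ?thesis
    using rtrancl_preserves assms(2,3) by metis
qed

lemma tree_edge_disconnects: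
  assumes T: "underlying_tree n E" and "F \<subseteq> E" "(a, b) \<in> E" "(a, b) \<notin> F"
  shows "(b, a) \<notin> (F \<union> F\<inverse>)\<^sup>*"
proof
  assume "(b, a) \<in> (F \<union> F\<inverse>)\<^sup>*"
  then obtain xs where p: "distinct (b # xs)" "last (b # xs) = a"
    "successively (\<lambda>x y. (x, y) \<in> F \<union> F\<inverse>) (b # xs)"
    by (rule rtrancl_imp_distinct_path)
  have "a \<noteq> b" "(b, a) \<notin> E"
    using underlying_treeD(2,3)[OF T] \<open>(a, b) \<in> E\<close> by auto
  \<comment> \<open>a shorter path would be the link \<open>(a, b)\<close> itself, which is not in \<open>F\<close>\<close>
  with p \<open>F \<subseteq> E\<close> \<open>(a, b) \<notin> F\<close> have "3 \<le> length (b # xs)"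
    by (cases xs rule: remdups_adj.cases) auto
  moreover have "\<forall>k < length (b # xs) - 1. adj E ((b # xs) ! k) ((b # xs) ! Suc k)"
    using successively_nth[OF p(3)] \<open>F \<subseteq> E\<close> by (fastforce simp: adj_def)
  moreover have "adj E (last (b # xs)) (hd (b # xs))"
    using p(2) \<open>(a, b) \<in> E\<close> by (simp add: adj_def)
  ultimately show False
    using underlying_treeD(5)[OF T] p(1) by blast
qed

lemma tree_potential_exists:
  assumes T: "underlying_tree n E" and "finite F" "F \<subseteq> E"
  shows "\<exists>u. \<forall>(a, b)\<in>F. u a - u b = (w (a, b) :: real)"
  using \<open>finite F\<close> \<open>F \<subseteq> E\<close>
proof (induction F rule: finite_induct)
  case empty
  then show ?case by simp
next
  case (insert e F)
  obtain a b where e: "e = (a, b)" by force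
  from insert obtain u where u: "\<forall>(a, b)\<in>F. u a - u b = w (a, b)" by auto
  define C where "C = {x. (b, x) \<in> (F \<union> F\<inverse>)\<^sup>*}"
  have "a \<notin> C"
    using tree_edge_disconnects[OF T, of F a b] insert e by (auto simp: C_def)
  have C_closed: "x \<in> C \<longleftrightarrow> x' \<in> C" if "(x, x') \<in> F" for x x'
    using that unfolding C_def by (auto intro: rtrancl_into_rtrancl)
  \<comment> \<open>shifting the potential on the component of \<open>b\<close> in \<open>F\<close> fixes the new edge\<close>
  define u' where "u' x = u x + (if x \<in> C then u a - u b - w (a, b) else 0)" for x
  have "\<forall>(x, x')\<in>insert e F. u' x - u' x' = w (x, x')"
    using u C_closed \<open>a \<notin> C\<close> e by (auto simp: u'_def C_def)
  then show ?case by blast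
qed

lemma incB_sum_edge:
  assumes "a \<noteq> b" "a \<le> n" "b \<le> n" "\<forall>i. i \<notin> {1..n} \<longrightarrow> u i = 0"
  shows "(\<Sum>i=1..n. incB (a, b) i * u i) = u a - u b"
proof -
  have "(\<Sum>i=1..n. incB (a, b) i * u i)
      = (\<Sum>i=1..n. (if a = i then u a else 0) - (if b = i then u b else 0))"
    using \<open>a \<noteq> b\<close> by (intro sum.cong) (auto simp: incB_def)
  also have "\<dots> = u a - u b"
    using assms by (auto simp: sum_subtractf)
  finally show ?thesis .
qed

lemma Binv_apply_eqI:
  assumes T: "underlying_tree n E" and Esub: "E \<subseteq> {0..n} \<times> {0..n}"
    and u0: "\<forall>i. i \<notin> {1..n} \<longrightarrow> u i = 0" and u: "\<forall>(a, b)\<in>E. u a - u b = w (a, b)"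
  shows "Binv_apply n E w = u"
  unfolding Binv_apply_def
proof (rule the_equality)
  have incB_sum: "(\<Sum>i=1..n. incB (a, b) i * v i) = v a - v b"
    if "(a, b) \<in> E" "\<forall>i. i \<notin> {1..n} \<longrightarrow> v i = 0" for a b v
    using incB_sum_edge[of a b n v] underlying_treeD(2)[OF T that(1)] Esub that by auto
  show "(\<forall>i. i \<notin> {1..n} \<longrightarrow> u i = 0) \<and> (\<forall>e\<in>E. (\<Sum>i=1..n. incB e i * u i) = w e)"
    using u0 u incB_sum by auto
  fix v
  assume v: "(\<forall>i. i \<notin> {1..n} \<longrightarrow> v i = 0) \<and> (\<forall>e\<in>E. (\<Sum>i=1..n. incB e i * v i) = w e)"
  have "v i = u i" if "i \<le> n" for i
  proof (rule tree_edge_invariant[OF T _ _ that])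
    show "\<forall>(a, b)\<in>E. v a = u a \<longleftrightarrow> v b = u b"
      using v u u0 incB_sum by fastforce
    show "v 0 = u 0"
      using u0 v by simp
  qed
  then show "v = u"
    using u0 v by (metis atLeastAtMost_iff ext)
qed

lemma Binv_apply_potential:
  assumes T: "underlying_tree n E" and Esub: "E \<subseteq> {0..n} \<times> {0..n}"
  shows "\<forall>i. i \<notin> {1..n} \<longrightarrow> Binv_apply n E w i = 0"
    and "(a, b) \<in> E \<Longrightarrow> Binv_apply n E w a - Binv_apply n E w b = w (a, b)"
proof -
  obtain u where u: "\<forall>(a, b)\<in>E. u a - u b = w (a, b)"
    using tree_potential_exists[OF T underlying_treeD(1)[OF T] subset_refl] by blast
  define u' where "u' i = (if i \<in> {1..n} then u i - u 0 else 0)" for i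
  have "u' i = u i - u 0" if "i \<le> n" for i
    using that by (cases "i = 0") (auto simp: u'_def)
  then have u': "\<forall>(a, b)\<in>E. u' a - u' b = w (a, b)"
    using u Esub by fastforce
  have "Binv_apply n E w = u'"
    by (rule Binv_apply_eqI[OF T Esub _ u']) (simp add: u'_def)
  then show "\<forall>i. i \<notin> {1..n} \<longrightarrow> Binv_apply n E w i = 0"
    and "(a, b) \<in> E \<Longrightarrow> Binv_apply n E w a - Binv_apply n E w b = w (a, b)"
    using u' by (auto simp: u'_def)
qed

section \<open>Branch flow equations\<close>

lemma node_balance_Re_Im:
  fixes f g w :: "'a \<Rightarrow> complex" and l :: "'a \<Rightarrow> real"
  shows "(\<Sum>k\<in>K. f k) - (\<Sum>i\<in>L. g i - w i * complex_of_real (l i)) + cnj yj * complex_of_real r = c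
     \<longleftrightarrow> Re c = (\<Sum>k\<in>K. Re (f k)) - (\<Sum>i\<in>L. Re (g i) - Re (w i) * l i) + Re yj * r \<and>
         Im c = (\<Sum>k\<in>K. Im (f k)) - (\<Sum>i\<in>L. Im (g i) - Im (w i) * l i) + (- Im yj) * r"
  by (auto simp: complex_eq_iff sum_subtractf)

lemma branch_flow_project:
  fixes Vi Vj I z S :: complex
  assumes "Vi - Vj = z * I" "S = Vi * cnj I" "Vi \<noteq> 0"
  shows "(cmod Vj)\<^sup>2 = (cmod Vi)\<^sup>2 - 2 * (Re z * Re S + Im z * Im S) + ((Re z)\<^sup>2 + (Im z)\<^sup>2) * (cmod I)\<^sup>2"
    and "(cmod I)\<^sup>2 = ((Re S)\<^sup>2 + (Im S)\<^sup>2) / (cmod Vi)\<^sup>2"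
proof -
  have Vj: "Vj = Vi - z * I"
    using assms(1) by (simp add: algebra_simps)
  show "(cmod Vj)\<^sup>2 = (cmod Vi)\<^sup>2 - 2 * (Re z * Re S + Im z * Im S) + ((Re z)\<^sup>2 + (Im z)\<^sup>2) * (cmod I)\<^sup>2"
    unfolding Vj cmod_power2 assms(2) by (simp add: algebra_simps power2_eq_square)
  have "(Re S)\<^sup>2 + (Im S)\<^sup>2 = (cmod Vi)\<^sup>2 * (cmod I)\<^sup>2"
    unfolding cmod_power2[symmetric] assms(2) by (simp add: norm_mult power_mult_distrib)
  then show "(cmod I)\<^sup>2 = ((Re S)\<^sup>2 + (Im S)\<^sup>2) / (cmod Vi)\<^sup>2"
    using assms(3) by simp
qed

lemma fullv_cmod: "fullv V0 (\<lambda>i. (cmod (V i))\<^sup>2) a = (cmod (fullV V0 V a))\<^sup>2"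
  by (simp add: fullv_def fullV_def)

lemma hhat_in_Yhat:
  assumes Esub: "E \<subseteq> {0..n} \<times> {0..n}" and "V0 > 0" and "x \<in> Xset n E z y V0 s"
  shows "hhat x \<in> Yhat n E z y V0 s"
proof -
  obtain S I V s0 where x: "x = (S, I, V, s0)"
    by (cases x)
  note X = \<open>x \<in> Xset n E z y V0 s\<close>[unfolded x Xset_def mem_Collect_eq prod.case]
  have edge: "fullV V0 V a - fullV V0 V b = z (a, b) * I (a, b)" "S (a, b) = fullV V0 V a * cnj (I (a, b))"
    if "(a, b) \<in> E" for a b
    using X that by auto
  have "fullV V0 V a \<noteq> 0" if "(a, b) \<in> E" for a b
    using that X Esub \<open>V0 > 0\<close> by (auto simp: fullV_def)
  note flow = branch_flow_project[OF edge(1) edge(2) this]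
  show ?thesis
    using X unfolding x hhat_def Yhat_def
    by (auto simp: fullv_cmod node_balance_Re_Im if_distrib[of Re] if_distrib[of Im]
        simp del: of_real_power distrib_left_numeral intro: flow)
qed

lemma cnj_eq_cmod_cis: "cnj w = of_real (cmod w) * cis (- Arg w)"
  using rcis_cnj[of w] by (simp add: rcis_def)

lemma cis_eq_cis_diff_iff: "cis b = cis (a - c) \<longleftrightarrow> cis (a - b) = cis c"
  by (auto simp: cis_divide[symmetric] field_simps)

lemma cis_diff_eq_cis_diff_iff: "cis (a - b) = cis (c - d) \<longleftrightarrow> cis (a - c) = cis (b - d)"
  by (auto simp: cis_divide[symmetric] field_simps)

lemma branch_flow_lift:
  fixes vi vj l t :: real and S z :: complex
  assumes "vi > 0" "vj > 0" and l: "l = ((Re S)\<^sup>2 + (Im S)\<^sup>2) / vi"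
    and vj: "vj = vi - 2 * (Re z * Re S + Im z * Im S) + ((Re z)\<^sup>2 + (Im z)\<^sup>2) * l"
  defines "I \<equiv> of_real (sqrt l) * cis (t - Arg S)"
  shows "of_real (sqrt vi) * cis t - z * I = of_real (sqrt vj) * cis (t - Arg (of_real vi - cnj z * S))"
    and "of_real (sqrt vi) * cis t * cnj I = S"
proof -
  define A where "A = of_real vi - cnj z * S"
  define r where "r = sqrt vi"
  have r: "r > 0" "r * r = vi"
    using \<open>vi > 0\<close> by (auto simp: r_def)
  \<comment> \<open>\<open>|A|\<^sup>2 = vi vj\<close> is the voltage drop equation in disguise\<close>
  have "(cmod A)\<^sup>2 = (vi - (Re z * Re S + Im z * Im S))\<^sup>2 + (Re z * Im S - Im z * Re S)\<^sup>2"
    unfolding cmod_power2 by (simp add: A_def power2_eq_square algebra_simps)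
  also have "\<dots> = vi * vj"
    using \<open>vi > 0\<close> unfolding vj l by (simp add: field_simps power2_eq_square)
  finally have "cmod A = r * sqrt vj"
    by (metis norm_ge_zero real_sqrt_mult real_sqrt_unique r_def)
  have I: "I = cis t * cnj S / of_real r"
  proof -
    have "sqrt l = cmod S / r"
      unfolding l r_def by (simp add: cmod_power2[symmetric] real_sqrt_divide)
    moreover have "cis (t - Arg S) = cis t * cis (- Arg S)"
      by (simp add: cis_mult)
    ultimately show ?thesis
      using r unfolding I_def cnj_eq_cmod_cis[of S] by (simp add: field_simps flip: of_real_mult)
  qed
  have "of_real r * cis t - z * I = cis t * (of_real vi - z * cnj S) / of_real r"
    unfolding I using r by (simp add: field_simps flip: of_real_mult)
  also have "\<dots> = cis t * cnj A / of_real r"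
    by (simp add: A_def)
  also have "\<dots> = of_real (sqrt vj) * (cis t * cis (- Arg A))"
    using r unfolding cnj_eq_cmod_cis[of A] \<open>cmod A = r * sqrt vj\<close> by (simp add: field_simps)
  also have "\<dots> = of_real (sqrt vj) * cis (t - Arg A)"
    by (simp add: cis_mult)
  finally show "of_real (sqrt vi) * cis t - z * I = of_real (sqrt vj) * cis (t - Arg (of_real vi - cnj z * S))"
    by (simp add: r_def A_def)
  have "cis t * cnj (cis t) = 1"
    by (simp add: cis_cnj cis_mult)
  then show "of_real (sqrt vi) * cis t * cnj I = S"
    unfolding I using r by (simp add: field_simps flip: r_def)
qed

lemma branch_flow_lift_iff:
  fixes vi vj l ti tj :: real and S z :: complex
  assumes "vi > 0" "vj > 0" "l = ((Re S)\<^sup>2 + (Im S)\<^sup>2) / vi"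
    and "vj = vi - 2 * (Re z * Re S + Im z * Im S) + ((Re z)\<^sup>2 + (Im z)\<^sup>2) * l"
  defines "I \<equiv> of_real (sqrt l) * cis (ti - Arg S)"
  shows "(of_real (sqrt vi) * cis ti - of_real (sqrt vj) * cis tj = z * I \<and>
          S = of_real (sqrt vi) * cis ti * cnj I)
     \<longleftrightarrow> cis (ti - tj) = cis (Arg (of_real vi - cnj z * S))"
proof -
  note flow = branch_flow_lift[OF assms(1-4), of ti, folded I_def]
  have "of_real (sqrt vi) * cis ti - of_real (sqrt vj) * cis tj = z * I \<longleftrightarrow>
      of_real (sqrt vj) * cis tj = of_real (sqrt vi) * cis ti - z * I"
    by (auto simp: algebra_simps)
  also have "\<dots> \<longleftrightarrow> cis tj = cis (ti - Arg (of_real vi - cnj z * S))"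
    using \<open>vj > 0\<close> by (simp add: flow(1))
  also have "\<dots> \<longleftrightarrow> cis (ti - tj) = cis (Arg (of_real vi - cnj z * S))"
    by (rule cis_eq_cis_diff_iff)
  finally show ?thesis
    using flow(2) by auto
qed

lemma h_theta_eq:
  assumes "\<theta> 0 = 0"
  shows "h_theta \<theta> (P, Q, l, v, p0, q0) =
    (\<lambda>e. Complex (P e) (Q e),
     \<lambda>e. of_real (sqrt (l e)) * cis (\<theta> (fst e) - Arg (Complex (P e) (Q e))),
     \<lambda>i. of_real (sqrt (v i)) * cis (\<theta> i), Complex p0 q0)"
proof -
  have "(\<lambda>i. if i = 0 then 0 else \<theta> i) = \<theta>"
    using assms by auto
  then show ?thesis
    by (simp add: h_theta_def)
qed

lemma Yhat_positivity:
  assumes "E \<subseteq> {0..n} \<times> {0..n}" "V0 > 0" "(P, Q, l, v, p0, q0) \<in> Yhat n E z y V0 s"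
  shows "a \<le> n \<Longrightarrow> fullv V0 v a > 0" and "v i \<ge> 0" and "l e \<ge> 0"
proof -
  note Y = assms(3)[unfolded Yhat_def mem_Collect_eq prod.case]
  show pos: "fullv V0 v a > 0" if "a \<le> n" for a
    using that Y \<open>V0 > 0\<close> by (auto simp: fullv_def)
  show "v i \<ge> 0"
    using Y by (cases "i \<in> {1..n}") (auto intro: less_imp_le)
  show "l e \<ge> 0"
  proof (cases "e \<in> E")
    case True
    then obtain a b where "e = (a, b)" "a \<le> n"
      using assms(1) by auto
    then show ?thesis
      using Y True pos[of a] by auto
  next
    case False
    then show ?thesis
      using Y by (cases e) auto
  qed
qed

lemma hhat_h_theta:
  assumes "E \<subseteq> {0..n} \<times> {0..n}" "V0 > 0" "(P, Q, l, v, p0, q0) \<in> Yhat n E z y V0 s"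
    and "\<theta> 0 = 0"
  shows "hhat (h_theta \<theta> (P, Q, l, v, p0, q0)) = (P, Q, l, v, p0, q0)"
  using Yhat_positivity(2,3)[OF assms(1-3)]
  by (simp add: h_theta_eq[of \<theta>, OF assms(4)] hhat_def norm_mult)

lemma h_theta_in_Xset_iff:
  assumes Esub: "E \<subseteq> {0..n} \<times> {0..n}" and "V0 > 0"
    and Y: "(P, Q, l, v, p0, q0) \<in> Yhat n E z y V0 s" and "\<theta> 0 = 0"
  shows "h_theta \<theta> (P, Q, l, v, p0, q0) \<in> Xset n E z y V0 s \<longleftrightarrow>
    (\<forall>(a, b)\<in>E. cis (\<theta> a - \<theta> b) = cis (beta z V0 (P, Q, l, v, p0, q0) (a, b)))"
proof -
  define S where "S e = Complex (P e) (Q e)" for e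
  define I where "I e = of_real (sqrt (l e)) * cis (\<theta> (fst e) - Arg (S e))" for e
  define V where "V i = of_real (sqrt (v i)) * cis (\<theta> i)" for i
  have h: "h_theta \<theta> (P, Q, l, v, p0, q0) = (S, I, V, Complex p0 q0)"
    unfolding h_theta_eq[of \<theta>, OF \<open>\<theta> 0 = 0\<close>] S_def I_def V_def ..
  note fullv_pos = Yhat_positivity(1)[OF Esub \<open>V0 > 0\<close> Y]
  have fullV: "fullV V0 V a = of_real (sqrt (fullv V0 v a)) * cis (\<theta> a)" for a
    using \<open>V0 > 0\<close> \<open>\<theta> 0 = 0\<close> by (simp add: fullV_def fullv_def V_def)
  have cmod_I: "(cmod (I e))\<^sup>2 = l e" for e
    using Yhat_positivity(3)[OF Esub \<open>V0 > 0\<close> Y] by (simp add: I_def norm_mult)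
  have cmod_V: "(cmod (fullV V0 V j))\<^sup>2 = fullv V0 v j" if "j \<le> n" for j
    using fullv_pos[OF that] by (simp add: fullV norm_mult)
  note Y = Y[unfolded Yhat_def mem_Collect_eq prod.case]
  have edge_iff: "(fullV V0 V a - fullV V0 V b = z (a, b) * I (a, b) \<and> S (a, b) = fullV V0 V a * cnj (I (a, b)))
      \<longleftrightarrow> cis (\<theta> a - \<theta> b) = cis (beta z V0 (P, Q, l, v, p0, q0) (a, b))"
    if "(a, b) \<in> E" for a b
  proof -
    have n: "a \<le> n" "b \<le> n"
      using that Esub by auto
    have flow: "l (a, b) = ((Re (S (a, b)))\<^sup>2 + (Im (S (a, b)))\<^sup>2) / fullv V0 v a"
      "fullv V0 v b = fullv V0 v a - 2 * (Re (z (a, b)) * Re (S (a, b)) + Im (z (a, b)) * Im (S (a, b)))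
        + ((Re (z (a, b)))\<^sup>2 + (Im (z (a, b)))\<^sup>2) * l (a, b)"
      using Y that by (auto simp: S_def)
    show ?thesis
      using branch_flow_lift_iff[OF fullv_pos[OF n(1)] fullv_pos[OF n(2)] flow,
          where ti = "\<theta> a" and tj = "\<theta> b"]
      by (simp add: fullV I_def beta_def S_def)
  qed
  have I_outside: "I e = 0" if "e \<notin> E" for e
    using Y that by (cases e) (simp add: I_def)
  \<comment> \<open>the remaining conditions of \<open>Xset\<close> are those of \<open>Yhat\<close> in complex form\<close>
  have "h_theta \<theta> (P, Q, l, v, p0, q0) \<in> Xset n E z y V0 s \<longleftrightarrow>
      (\<forall>(a, b)\<in>E. fullV V0 V a - fullV V0 V b = z (a, b) * I (a, b) \<and> S (a, b) = fullV V0 V a * cnj (I (a, b)))"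
    using Y unfolding h Xset_def mem_Collect_eq prod.case
    by (auto simp: cmod_I cmod_V node_balance_Re_Im S_def V_def I_outside Complex_eq_0 if_distrib[of Re] if_distrib[of Im]
        simp del: of_real_power)
  also have "\<dots> \<longleftrightarrow> (\<forall>(a, b)\<in>E. cis (\<theta> a - \<theta> b) = cis (beta z V0 (P, Q, l, v, p0, q0) (a, b)))"
    using edge_iff by (intro ball_cong) auto
  finally show ?thesis .
qed

section \<open>Recovering the angles\<close>

lemma wrap_bounds: "- pi < wrap x" "wrap x \<le> pi"
  using ceiling_correct[of "(x - pi) / (2 * pi)"]
  by (simp_all add: wrap_def less_divide_eq divide_le_eq algebra_simps del: le_of_int_ceiling)

lemma cis_wrap: "cis (wrap x) = cis x"
proof -
  have "cis (wrap x) = cis x / cis (2 * pi * of_int \<lceil>(x - pi) / (2 * pi)\<rceil>)"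
    by (simp add: wrap_def cis_divide[symmetric])
  also have "\<dots> = cis x"
    by (subst cis_multiple_2pi) auto
  finally show ?thesis .
qed

lemma cis_inj_on_interval:
  assumes "cis a = cis b" "- pi < a" "a \<le> pi" "- pi < b" "b \<le> pi"
  shows "a = b"
proof -
  have "Arg (cis a) = a" "Arg (cis b) = b"
    using assms(2-5) by (auto intro!: cis_Arg_unique simp: sgn_div_norm)
  then show ?thesis
    using assms(1) by metis
qed

lemma Theta_zero: "\<theta> \<in> Theta n \<Longrightarrow> \<theta> 0 = 0"
  by (simp add: Theta_def)

lemma theta_star_in_Theta: "theta_star n E z V0 yh \<in> Theta n"
  by (simp add: Theta_def theta_star_def wrap_bounds)

lemma cis_theta_star:
  assumes "underlying_tree n E" "E \<subseteq> {0..n} \<times> {0..n}"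
  shows "cis (theta_star n E z V0 yh i) = cis (Binv_apply n E (beta z V0 yh) i)"
  using Binv_apply_potential(1)[OF assms] by (simp add: theta_star_def cis_wrap)

lemma theta_star_edge:
  assumes T: "underlying_tree n E" and Esub: "E \<subseteq> {0..n} \<times> {0..n}" and "(a, b) \<in> E"
  shows "cis (theta_star n E z V0 yh a - theta_star n E z V0 yh b) = cis (beta z V0 yh (a, b))"
proof -
  let ?u = "Binv_apply n E (beta z V0 yh)"
  have "cis (theta_star n E z V0 yh a - theta_star n E z V0 yh b) = cis (?u a) / cis (?u b)"
    by (simp add: cis_divide[symmetric] cis_theta_star[OF T Esub])
  also have "\<dots> = cis (beta z V0 yh (a, b))"
    using Binv_apply_potential(2)[OF T Esub \<open>(a, b) \<in> E\<close>] by (simp add: cis_divide)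
  finally show ?thesis .
qed

lemma theta_star_unique:
  assumes T: "underlying_tree n E" and Esub: "E \<subseteq> {0..n} \<times> {0..n}"
    and "\<theta> \<in> Theta n" and edge: "\<forall>(a, b)\<in>E. cis (\<theta> a - \<theta> b) = cis (beta z V0 yh (a, b))"
  shows "\<theta> = theta_star n E z V0 yh"
proof
  fix i
  define u where "u = Binv_apply n E (beta z V0 yh)"
  note u = Binv_apply_potential[OF T Esub, where w = "beta z V0 yh", folded u_def]
  show "\<theta> i = theta_star n E z V0 yh i"
  proof (cases "i \<in> {1..n}")
    case True
    \<comment> \<open>\<open>\<theta> - u\<close> is constant modulo \<open>2\<pi>\<close> along links and vanishes at the root\<close>
    have "cis (\<theta> i - u i) = 1"
    proof (rule tree_edge_invariant[OF T])
      have "cis (\<theta> a - u a) = cis (\<theta> b - u b)" if "(a, b) \<in> E" for a b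
        using edge u(2)[OF that] that by (auto simp flip: cis_diff_eq_cis_diff_iff)
      then show "\<forall>(a, b)\<in>E. cis (\<theta> a - u a) = 1 \<longleftrightarrow> cis (\<theta> b - u b) = 1"
        by auto
      show "cis (\<theta> 0 - u 0) = 1"
        using u(1) Theta_zero[OF \<open>\<theta> \<in> Theta n\<close>] by simp
    qed (use True in simp)
    then have "cis (\<theta> i) = cis (theta_star n E z V0 yh i)"
      by (simp add: cis_theta_star[OF T Esub] u_def cis_divide[symmetric])
    then show ?thesis
      using True \<open>\<theta> \<in> Theta n\<close> theta_star_in_Theta[of n E z V0 yh]
      by (intro cis_inj_on_interval) (auto simp: Theta_def)
  next
    case False
    then show ?thesis
      using \<open>\<theta> \<in> Theta n\<close> theta_star_in_Theta[of n E z V0 yh] by (simp add: Theta_def)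
  qed
qed

theorem theorem3:
  fixes n :: nat and E :: "(nat \<times> nat) set"
    and z :: "nat \<times> nat \<Rightarrow> complex" and y :: "nat \<Rightarrow> complex"
    and V0 :: real and s :: "nat \<Rightarrow> complex"
  assumes "E \<subseteq> {0..n} \<times> {0..n}"
    and "underlying_tree n E"
    and "V0 > 0"
  shows "hhat ` Xset n E z y V0 s = Yhat n E z y V0 s \<and>
         (\<forall>yh\<in>Yhat n E z y V0 s.
            theta_star n E z V0 yh \<in> Theta n \<and>
            h_theta (theta_star n E z V0 yh) yh \<in> Xset n E z y V0 s \<and>
            (\<forall>\<theta>\<in>Theta n. h_theta \<theta> yh \<in> Xset n E z y V0 s \<longrightarrow> \<theta> = theta_star n E z V0 yh))"
proof -
  note Esub = assms(1) and T = assms(2)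
  have lift: "h_theta (theta_star n E z V0 yh) yh \<in> Xset n E z y V0 s \<and>
      hhat (h_theta (theta_star n E z V0 yh) yh) = yh \<and>
      (\<forall>\<theta>\<in>Theta n. h_theta \<theta> yh \<in> Xset n E z y V0 s \<longrightarrow> \<theta> = theta_star n E z V0 yh)"
    if "yh \<in> Yhat n E z y V0 s" for yh
  proof -
    obtain P Q l v p0 q0 where yh: "yh = (P, Q, l, v, p0, q0)"
      by (cases yh)
    have in_Xset_iff: "h_theta \<theta> yh \<in> Xset n E z y V0 s \<longleftrightarrow>
        (\<forall>(a, b)\<in>E. cis (\<theta> a - \<theta> b) = cis (beta z V0 yh (a, b)))" if "\<theta> \<in> Theta n" for \<theta>
      using h_theta_in_Xset_iff[where \<theta> = \<theta>, OF Esub \<open>V0 > 0\<close> \<open>yh \<in> _\<close>[unfolded yh] Theta_zero[OF that]]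
      unfolding yh .
    show ?thesis
      using in_Xset_iff theta_star_in_Theta theta_star_edge[OF T Esub] theta_star_unique[OF T Esub]
        hhat_h_theta[where \<theta> = "theta_star n E z V0 yh", OF Esub \<open>V0 > 0\<close> \<open>yh \<in> _\<close>[unfolded yh]
          Theta_zero[OF theta_star_in_Theta]]
      unfolding yh by blast
  qed
  then have "Yhat n E z y V0 s \<subseteq> hhat ` Xset n E z y V0 s"
    by (metis image_eqI subsetI)
  then show ?thesis
    using hhat_in_Yhat[OF Esub \<open>V0 > 0\<close>] lift theta_star_in_Theta by blast
qed

end
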